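(* Let $(\Omega,\mathcal A,\mu)$ be a measure space, $X$ a real locally convex space, and $L$ a locally convex space of $\mathcal A$-measurable functions $u:\Omega\to X$ such that $L$ is barreled, $u\mapsto\chi_Au$ is a well-defined continuous map $L\to L$ for every $A\in\mathcal A$, and $\{\chi_Au:A\in\mathcal A\}$ is bounded in $L$ for every $u\in L$. For an isotone (or antitone) net $(\Omega_\alpha)$ in $\mathcal A$ let $\lim_\alpha P_\alpha$ denote the pointwise $\sigma(L',L)$-limit of the adjoints $P_\alpha$ of $u\mapsto\chi_{\Omega_\alpha}u$. If two isotone nets $(\Omega_\alpha)$, $(\Omega'_{\alpha'})$ in $\mathcal A$ are eventually contained in each other, i.e. for every $\alpha$ there is $\alpha'_0$ with $\Omega_\alpha\subseteq\Omega'_{\alpha'}$ for all $\alpha'\ge\alpha'_0$, and for every $\alpha'$ there is $\alpha_0$ with $\Omega'_{\alpha'}\subseteq\Omega_\alpha$ for all $\alpha\ge\alpha_0$ (with reversed inclusions in the case of two antitone nets), then $\lim_\alpha P_\alpha=\lim_{\alpha'}P_{\alpha'}$. In particular, if $\mathfrak S\subset\mathcal A$ is a system of measurable sets, then the limit projector is the same for every isotone net $(\Omega_\alpha)$ with all $\Omega_\alpha\in\mathfrak S$ such that each $S\in\mathfrak S$ is eventually contained in $\Omega_\alpha$.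
   Context: The pointwise weak* limit of the adjoints exists for every isotone or antitone net and is a continuous linear projector on $L'$. *)

theory Defs
  imports "HOL-Analysis.Analysis"
begin

definition seminorm_on :: "'v::real_vector set \<Rightarrow> ('v \<Rightarrow> real) \<Rightarrow> bool" where
  "seminorm_on V p \<longleftrightarrow>
     (\<forall>x\<in>V. p x \<ge> 0) \<and>
     (\<forall>x\<in>V. \<forall>y\<in>V. p (x + y) \<le> p x + p y) \<and>
     (\<forall>x\<in>V. \<forall>c. p (c *\<^sub>R x) = \<bar>c\<bar> * p x)"

definition subspace_on :: "'v::real_vector set \<Rightarrow> bool" where
  "subspace_on V \<longleftrightarrow> 0 \<in> V \<and> (\<forall>x\<in>V. \<forall>y\<in>V. x + y \<in> V) \<and> (\<forall>x\<in>V. \<forall>c. c *\<^sub>R x \<in> V)"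

definition lc_topology :: "'v::real_vector set \<Rightarrow> ('k \<Rightarrow> 'v \<Rightarrow> real) \<Rightarrow> 'v topology" where
  "lc_topology V q = topology (\<lambda>U. U \<subseteq> V \<and>
     (\<forall>x\<in>U. \<exists>F e. finite F \<and> e > 0 \<and> {y\<in>V. \<forall>k\<in>F. q k (y - x) < e} \<subseteq> U))"

definition lc_space :: "'v::real_vector set \<Rightarrow> ('k \<Rightarrow> 'v \<Rightarrow> real) \<Rightarrow> bool" where
  "lc_space V q \<longleftrightarrow> subspace_on V \<and> (\<forall>k. seminorm_on V (q k))"

definition fadd :: "('a \<Rightarrow> 'x::real_vector) \<Rightarrow> ('a \<Rightarrow> 'x) \<Rightarrow> 'a \<Rightarrow> 'x" where
  "fadd u v = (\<lambda>w. u w + v w)"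

definition fscale :: "real \<Rightarrow> ('a \<Rightarrow> 'x::real_vector) \<Rightarrow> 'a \<Rightarrow> 'x" where
  "fscale c u = (\<lambda>w. c *\<^sub>R u w)"

definition fzero :: "'a \<Rightarrow> 'x::real_vector" where
  "fzero = (\<lambda>w. 0)"

definition chi_mult :: "'a set \<Rightarrow> ('a \<Rightarrow> 'x::real_vector) \<Rightarrow> 'a \<Rightarrow> 'x" where
  "chi_mult A u = (\<lambda>w. indicator A w *\<^sub>R u w)"

definition fsubspace :: "('a \<Rightarrow> 'x::real_vector) set \<Rightarrow> bool" where
  "fsubspace L \<longleftrightarrow> fzero \<in> L \<and> (\<forall>u\<in>L. \<forall>v\<in>L. fadd u v \<in> L) \<and> (\<forall>u\<in>L. \<forall>c. fscale c u \<in> L)"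

definition fseminorm_on :: "('a \<Rightarrow> 'x::real_vector) set \<Rightarrow> (('a \<Rightarrow> 'x) \<Rightarrow> real) \<Rightarrow> bool" where
  "fseminorm_on L p \<longleftrightarrow>
     (\<forall>u\<in>L. p u \<ge> 0) \<and>
     (\<forall>u\<in>L. \<forall>v\<in>L. p (fadd u v) \<le> p u + p v) \<and>
     (\<forall>u\<in>L. \<forall>c. p (fscale c u) = \<bar>c\<bar> * p u)"

definition flc_topology :: "('a \<Rightarrow> 'x::real_vector) set \<Rightarrow> ('k \<Rightarrow> ('a \<Rightarrow> 'x) \<Rightarrow> real) \<Rightarrow> ('a \<Rightarrow> 'x) topology" where
  "flc_topology L q = topology (\<lambda>U. U \<subseteq> L \<and>
     (\<forall>u\<in>U. \<exists>F e. finite F \<and> e > 0 \<and>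
        {v\<in>L. \<forall>k\<in>F. q k (fadd v (fscale (-1) u)) < e} \<subseteq> U))"

definition flc_space :: "('a \<Rightarrow> 'x::real_vector) set \<Rightarrow> ('k \<Rightarrow> ('a \<Rightarrow> 'x) \<Rightarrow> real) \<Rightarrow> bool" where
  "flc_space L q \<longleftrightarrow> fsubspace L \<and> (\<forall>k. fseminorm_on L (q k))"

definition fbarrel :: "('a \<Rightarrow> 'x::real_vector) set \<Rightarrow> ('k \<Rightarrow> ('a \<Rightarrow> 'x) \<Rightarrow> real) \<Rightarrow> ('a \<Rightarrow> 'x) set \<Rightarrow> bool" where
  "fbarrel L q B \<longleftrightarrow> B \<subseteq> L \<and> closedin (flc_topology L q) B \<and>
     (\<forall>u\<in>B. \<forall>v\<in>B. \<forall>t. 0 \<le> t \<and> t \<le> 1 \<longrightarrow> fadd (fscale t u) (fscale (1 - t) v) \<in> B) \<and>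
     (\<forall>u\<in>B. \<forall>c. \<bar>c\<bar> \<le> 1 \<longrightarrow> fscale c u \<in> B) \<and>
     (\<forall>u\<in>L. \<exists>r>0. \<forall>c. \<bar>c\<bar> \<le> r \<longrightarrow> fscale c u \<in> B)"

definition barreled :: "('a \<Rightarrow> 'x::real_vector) set \<Rightarrow> ('k \<Rightarrow> ('a \<Rightarrow> 'x) \<Rightarrow> real) \<Rightarrow> bool" where
  "barreled L q \<longleftrightarrow> (\<forall>B. fbarrel L q B \<longrightarrow>
     (\<exists>U. openin (flc_topology L q) U \<and> fzero \<in> U \<and> U \<subseteq> B))"

definition fbounded :: "('a \<Rightarrow> 'x::real_vector) set \<Rightarrow> ('k \<Rightarrow> ('a \<Rightarrow> 'x) \<Rightarrow> real) \<Rightarrow> ('a \<Rightarrow> 'x) set \<Rightarrow> bool" where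
  "fbounded L q B \<longleftrightarrow> B \<subseteq> L \<and> (\<forall>U. openin (flc_topology L q) U \<and> fzero \<in> U \<longrightarrow>
     (\<exists>t>0. \<forall>s. \<bar>s\<bar> \<ge> t \<longrightarrow> B \<subseteq> fscale s ` U))"

definition fdual :: "('a \<Rightarrow> 'x::real_vector) set \<Rightarrow> ('k \<Rightarrow> ('a \<Rightarrow> 'x) \<Rightarrow> real) \<Rightarrow> (('a \<Rightarrow> 'x) \<Rightarrow> real) set" where
  "fdual L q = {\<phi>. (\<forall>u\<in>L. \<forall>v\<in>L. \<phi> (fadd u v) = \<phi> u + \<phi> v) \<and>
                  (\<forall>u\<in>L. \<forall>c. \<phi> (fscale c u) = c * \<phi> u) \<and>
                  continuous_map (flc_topology L q) euclidean \<phi>}"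

definition directed_on :: "'i set \<Rightarrow> ('i \<Rightarrow> 'i \<Rightarrow> bool) \<Rightarrow> bool" where
  "directed_on I le \<longleftrightarrow> I \<noteq> {} \<and> (\<forall>a\<in>I. le a a) \<and>
     (\<forall>a\<in>I. \<forall>b\<in>I. \<forall>c\<in>I. le a b \<and> le b c \<longrightarrow> le a c) \<and>
     (\<forall>a\<in>I. \<forall>b\<in>I. \<exists>c\<in>I. le a c \<and> le b c)"

definition net_eventually :: "'i set \<Rightarrow> ('i \<Rightarrow> 'i \<Rightarrow> bool) \<Rightarrow> ('i \<Rightarrow> bool) \<Rightarrow> bool" where
  "net_eventually I le P \<longleftrightarrow> (\<exists>a0\<in>I. \<forall>a\<in>I. le a0 a \<longrightarrow> P a)"

definition net_tendsto :: "'i set \<Rightarrow> ('i \<Rightarrow> 'i \<Rightarrow> bool) \<Rightarrow> ('i \<Rightarrow> real) \<Rightarrow> real \<Rightarrow> bool" where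
  "net_tendsto I le f c \<longleftrightarrow> (\<forall>e>0. net_eventually I le (\<lambda>a. \<bar>f a - c\<bar> < e))"

definition isotone_net :: "'i set \<Rightarrow> ('i \<Rightarrow> 'i \<Rightarrow> bool) \<Rightarrow> ('i \<Rightarrow> 'a set) \<Rightarrow> bool" where
  "isotone_net I le \<Omega> \<longleftrightarrow> (\<forall>a\<in>I. \<forall>b\<in>I. le a b \<longrightarrow> \<Omega> a \<subseteq> \<Omega> b)"

definition antitone_net :: "'i set \<Rightarrow> ('i \<Rightarrow> 'i \<Rightarrow> bool) \<Rightarrow> ('i \<Rightarrow> 'a set) \<Rightarrow> bool" where
  "antitone_net I le \<Omega> \<longleftrightarrow> (\<forall>a\<in>I. \<forall>b\<in>I. le a b \<longrightarrow> \<Omega> b \<subseteq> \<Omega> a)"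

text \<open>psi is the pointwise sigma(L',L)-limit of the adjoints P_a phi = phi o (u |-> chi_{Omega a} u).\<close>
definition weakstar_adj_limit ::
  "('a \<Rightarrow> 'x::real_vector) set \<Rightarrow> 'i set \<Rightarrow> ('i \<Rightarrow> 'i \<Rightarrow> bool) \<Rightarrow> ('i \<Rightarrow> 'a set)
     \<Rightarrow> (('a \<Rightarrow> 'x) \<Rightarrow> real) \<Rightarrow> (('a \<Rightarrow> 'x) \<Rightarrow> real) \<Rightarrow> bool" where
  "weakstar_adj_limit L I le \<Omega> \<phi> \<psi> \<longleftrightarrow>
     (\<forall>u\<in>L. net_tendsto I le (\<lambda>a. \<phi> (chi_mult (\<Omega> a) u)) (\<psi> u))"

definition same_adj_limit ::
  "('a \<Rightarrow> 'x::real_vector) set \<Rightarrow> ('k \<Rightarrow> ('a \<Rightarrow> 'x) \<Rightarrow> real) \<Rightarrow>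
     'i set \<Rightarrow> ('i \<Rightarrow> 'i \<Rightarrow> bool) \<Rightarrow> ('i \<Rightarrow> 'a set) \<Rightarrow>
     'j set \<Rightarrow> ('j \<Rightarrow> 'j \<Rightarrow> bool) \<Rightarrow> ('j \<Rightarrow> 'a set) \<Rightarrow> bool" where
  "same_adj_limit L q I le \<Omega> J le' \<Omega>' \<longleftrightarrow>
     (\<forall>\<phi>\<in>fdual L q. \<exists>\<psi>\<in>fdual L q.
        weakstar_adj_limit L I le \<Omega> \<phi> \<psi> \<and> weakstar_adj_limit L J le' \<Omega>' \<phi> \<psi>)"

end

theory Submission
  imports Defs
begin

text \<open>
  Fix \<open>\<phi> \<in> L'\<close> and \<open>u \<in> L\<close>. Since \<open>{\<chi>\<^sub>A u | A}\<close> is bounded, \<open>\<nu> A = \<phi> (\<chi>\<^sub>A u)\<close> is a bounded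
  finitely additive set function, hence the difference of the two bounded monotone set functions
  \<open>P S = sup {\<nu> B | B \<subseteq> S}\<close> and \<open>P - \<nu>\<close>. Along a monotone net of sets each of them is a
  monotone bounded net of reals, so it converges, and for two mutually cofinal nets the limits
  (a supremum or an infimum) coincide. The common limit \<open>\<psi>\<close> is linear and satisfies
  \<open>|\<psi>| \<le> 1\<close> on the polar of the pointwise bounded family \<open>{\<phi> \<circ> \<chi>\<^sub>A | A}\<close>. That polar is a
  barrel, hence a neighbourhood of zero because \<open>L\<close> is barreled, so \<open>\<psi>\<close> is continuous.
\<close>

section \<open>Nets as filters\<close>

lemma directed_onE:
  assumes "directed_on I le" "a \<in> I" "b \<in> I"
  obtains c where "c \<in> I" "le a c" "le b c"
  using assms unfolding directed_on_def by metis

lemma directed_on_trans: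
  assumes "directed_on I le" "a \<in> I" "b \<in> I" "c \<in> I" "le a b" "le b c"
  shows "le a c"
  using assms unfolding directed_on_def by metis

lemma directed_on_refl:
  assumes "directed_on I le" "a \<in> I"
  shows "le a a"
  using assms unfolding directed_on_def by metis

lemma directed_on_nonempty:
  assumes "directed_on I le"
  shows "I \<noteq> {}"
  using assms unfolding directed_on_def by metis

definition net_filter :: "'i set \<Rightarrow> ('i \<Rightarrow> 'i \<Rightarrow> bool) \<Rightarrow> 'i filter" where
  "net_filter I le = (INF a\<in>I. principal {b\<in>I. le a b})"

lemma eventually_net_filter:
  assumes "directed_on I le"
  shows "eventually P (net_filter I le) \<longleftrightarrow> net_eventually I le P"
proof -
  have directed:
      "\<exists>c\<in>I. principal {x\<in>I. le c x} \<le> inf (principal {x\<in>I. le a x}) (principal {x\<in>I. le b x})"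
    if ab: "a \<in> I" "b \<in> I" for a b
  proof -
    obtain c where "c \<in> I" "le a c" "le b c"
      using directed_onE[OF assms ab] .
    then have "{x\<in>I. le c x} \<subseteq> {x\<in>I. le a x} \<inter> {x\<in>I. le b x}"
      using directed_on_trans[OF assms] ab by blast
    then have "principal {x\<in>I. le c x} \<le> inf (principal {x\<in>I. le a x}) (principal {x\<in>I. le b x})"
      by (simp add: inf_principal)
    then show ?thesis
      using \<open>c \<in> I\<close> by blast
  qed
  have "eventually P (net_filter I le) \<longleftrightarrow> (\<exists>a\<in>I. eventually P (principal {x\<in>I. le a x}))"
    unfolding net_filter_def
    by (rule eventually_INF_base[OF directed_on_nonempty[OF assms] directed])
  also have "\<dots> \<longleftrightarrow> net_eventually I le P"
    unfolding eventually_principal net_eventually_def by blast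
  finally show ?thesis .
qed

lemma net_filter_neq_bot:
  assumes "directed_on I le"
  shows "net_filter I le \<noteq> bot"
proof
  assume "net_filter I le = bot"
  then have "net_eventually I le (\<lambda>_. False)"
    using eventually_net_filter[OF assms, of "\<lambda>_. False"] by simp
  then show False
    unfolding net_eventually_def using directed_on_refl[OF assms] by blast
qed

lemma eventually_in_net_filter:
  assumes "directed_on I le"
  shows "eventually (\<lambda>a. a \<in> I) (net_filter I le)"
  unfolding eventually_net_filter[OF assms] net_eventually_def
  using directed_on_nonempty[OF assms] by blast

lemma net_eventually_imp_ex:
  assumes "directed_on I le" "net_eventually I le P"
  shows "\<exists>a\<in>I. P a"
proof -
  obtain a0 where "a0 \<in> I" "\<forall>a\<in>I. le a0 a \<longrightarrow> P a"
    using assms(2) unfolding net_eventually_def by blast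
  then show ?thesis
    using directed_on_refl[OF assms(1) \<open>a0 \<in> I\<close>] by blast
qed

lemma ball_net_eventually_imp_ex:
  assumes "directed_on J le'" "\<forall>a\<in>I. net_eventually J le' (R a)"
  shows "\<forall>a\<in>I. \<exists>b\<in>J. R a b"
proof
  fix a assume "a \<in> I"
  then have "net_eventually J le' (R a)"
    using assms(2) by blast
  then show "\<exists>b\<in>J. R a b"
    by (rule net_eventually_imp_ex[OF assms(1)])
qed

lemma net_tendsto_iff_tendsto:
  assumes "directed_on I le"
  shows "net_tendsto I le f c \<longleftrightarrow> (f \<longlongrightarrow> c) (net_filter I le)"
  by (simp add: tendsto_iff net_tendsto_def eventually_net_filter[OF assms] dist_real_def)

lemma tendsto_SUP_net_filter:
  fixes f :: "'i \<Rightarrow> real"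
  assumes dir: "directed_on I le" and mono: "monotone_on I le (\<le>) f" and bdd: "bdd_above (f ` I)"
  shows "(f \<longlongrightarrow> (SUP a\<in>I. f a)) (net_filter I le)"
proof (rule increasing_tendsto)
  obtain a0 where "a0 \<in> I"
    using directed_on_nonempty[OF dir] by blast
  then show "\<forall>\<^sub>F a in net_filter I le. f a \<le> (SUP a\<in>I. f a)"
    unfolding eventually_net_filter[OF dir] net_eventually_def
    using cSUP_upper[OF _ bdd] by blast
next
  fix x assume "x < (SUP a\<in>I. f a)"
  moreover have "I \<noteq> {}"
    using directed_on_nonempty[OF dir] .
  ultimately obtain a0 where a0: "a0 \<in> I" "x < f a0"
    using less_cSUP_iff[OF _ bdd] by blast
  have "x < f a" if "a \<in> I" "le a0 a" for a
    using mono a0 that unfolding monotone_on_def by fastforce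
  then show "\<forall>\<^sub>F a in net_filter I le. x < f a"
    unfolding eventually_net_filter[OF dir] net_eventually_def using a0(1) by blast
qed

lemma isotone_nets_common_limit:
  fixes f :: "'i \<Rightarrow> real" and g :: "'j \<Rightarrow> real"
  assumes "directed_on I le" "directed_on J le'"
    and "monotone_on I le (\<le>) f" "monotone_on J le' (\<le>) g"
    and "bdd_above (f ` I)" "bdd_above (g ` J)"
    and "\<forall>a\<in>I. \<exists>b\<in>J. f a \<le> g b" "\<forall>b\<in>J. \<exists>a\<in>I. g b \<le> f a"
  shows "\<exists>c. (f \<longlongrightarrow> c) (net_filter I le) \<and> (g \<longlongrightarrow> c) (net_filter J le')"
proof -
  have "I \<noteq> {}" "J \<noteq> {}"
    using assms(1,2) by (simp_all add: directed_on_nonempty)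
  then have "(SUP a\<in>I. f a) = (SUP b\<in>J. g b)"
    using assms(5-8) by (intro antisym cSUP_mono) auto
  then show ?thesis
    using tendsto_SUP_net_filter[OF assms(1,3,5)] tendsto_SUP_net_filter[OF assms(2,4,6)] by auto
qed

lemma antitone_nets_common_limit:
  fixes f :: "'i \<Rightarrow> real" and g :: "'j \<Rightarrow> real"
  assumes "directed_on I le" "directed_on J le'"
    and "monotone_on I le (\<ge>) f" "monotone_on J le' (\<ge>) g"
    and "bdd_below (f ` I)" "bdd_below (g ` J)"
    and "\<forall>a\<in>I. \<exists>b\<in>J. g b \<le> f a" "\<forall>b\<in>J. \<exists>a\<in>I. f a \<le> g b"
  shows "\<exists>c. (f \<longlongrightarrow> c) (net_filter I le) \<and> (g \<longlongrightarrow> c) (net_filter J le')"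
proof -
  have "\<exists>c. ((\<lambda>a. - f a) \<longlongrightarrow> c) (net_filter I le) \<and> ((\<lambda>b. - g b) \<longlongrightarrow> c) (net_filter J le')"
  proof (rule isotone_nets_common_limit)
    show "monotone_on I le (\<le>) (\<lambda>a. - f a)" "monotone_on J le' (\<le>) (\<lambda>b. - g b)"
      using assms(3,4) by (simp_all add: monotone_on_def)
  qed (use assms in \<open>simp_all add: bdd_above_uminus_image\<close>)
  then obtain c where "((\<lambda>a. - f a) \<longlongrightarrow> c) (net_filter I le)" "((\<lambda>b. - g b) \<longlongrightarrow> c) (net_filter J le')"
    by blast
  from this[THEN tendsto_minus] show ?thesis by auto
qed

section \<open>Mutually cofinal monotone nets of sets\<close>

text \<open>For monotone nets, containment in \<^emph>\<open>some\<close> member of the other net is equivalent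
  to the eventual containment used in the theorem.\<close>
definition mutually_cofinal_monotone_nets ::
  "'i set \<Rightarrow> ('i \<Rightarrow> 'i \<Rightarrow> bool) \<Rightarrow> ('i \<Rightarrow> 'a set) \<Rightarrow> 'j set \<Rightarrow> ('j \<Rightarrow> 'j \<Rightarrow> bool) \<Rightarrow> ('j \<Rightarrow> 'a set) \<Rightarrow> bool"
  where "mutually_cofinal_monotone_nets I le \<Omega> J le' \<Omega>' \<longleftrightarrow>
    (isotone_net I le \<Omega> \<and> isotone_net J le' \<Omega>' \<and>
      (\<forall>a\<in>I. \<exists>b\<in>J. \<Omega> a \<subseteq> \<Omega>' b) \<and> (\<forall>b\<in>J. \<exists>a\<in>I. \<Omega>' b \<subseteq> \<Omega> a)) \<or>
    (antitone_net I le \<Omega> \<and> antitone_net J le' \<Omega>' \<and>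
      (\<forall>a\<in>I. \<exists>b\<in>J. \<Omega>' b \<subseteq> \<Omega> a) \<and> (\<forall>b\<in>J. \<exists>a\<in>I. \<Omega> a \<subseteq> \<Omega>' b))"

lemma isotone_net_iff_monotone_on: "isotone_net I le \<Omega> \<longleftrightarrow> monotone_on I le (\<subseteq>) \<Omega>"
  by (simp add: isotone_net_def monotone_on_def)

lemma antitone_net_iff_monotone_on: "antitone_net I le \<Omega> \<longleftrightarrow> monotone_on I le (\<supseteq>) \<Omega>"
  by (simp add: antitone_net_def monotone_on_def)

lemma mutually_cofinal_monotone_nets_if_eventually:
  assumes dir: "directed_on I le" "directed_on J le'"
    and "(isotone_net I le \<Omega> \<and> isotone_net J le' \<Omega>' \<and>
          (\<forall>a\<in>I. net_eventually J le' (\<lambda>b. \<Omega> a \<subseteq> \<Omega>' b)) \<and>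
          (\<forall>b\<in>J. net_eventually I le (\<lambda>a. \<Omega>' b \<subseteq> \<Omega> a)))
        \<or> (antitone_net I le \<Omega> \<and> antitone_net J le' \<Omega>' \<and>
          (\<forall>a\<in>I. net_eventually J le' (\<lambda>b. \<Omega>' b \<subseteq> \<Omega> a)) \<and>
          (\<forall>b\<in>J. net_eventually I le (\<lambda>a. \<Omega> a \<subseteq> \<Omega>' b)))"
  shows "mutually_cofinal_monotone_nets I le \<Omega> J le' \<Omega>'"
  using assms(3)
proof (elim disjE conjE)
  assume "isotone_net I le \<Omega>" "isotone_net J le' \<Omega>'"
    and ev: "\<forall>a\<in>I. net_eventually J le' (\<lambda>b. \<Omega> a \<subseteq> \<Omega>' b)"
      "\<forall>b\<in>J. net_eventually I le (\<lambda>a. \<Omega>' b \<subseteq> \<Omega> a)"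
  moreover have "\<forall>a\<in>I. \<exists>b\<in>J. \<Omega> a \<subseteq> \<Omega>' b" "\<forall>b\<in>J. \<exists>a\<in>I. \<Omega>' b \<subseteq> \<Omega> a"
    using ball_net_eventually_imp_ex[OF dir(2) ev(1)] ball_net_eventually_imp_ex[OF dir(1) ev(2)] .
  ultimately show ?thesis
    unfolding mutually_cofinal_monotone_nets_def by blast
next
  assume "antitone_net I le \<Omega>" "antitone_net J le' \<Omega>'"
    and ev: "\<forall>a\<in>I. net_eventually J le' (\<lambda>b. \<Omega>' b \<subseteq> \<Omega> a)"
      "\<forall>b\<in>J. net_eventually I le (\<lambda>a. \<Omega> a \<subseteq> \<Omega>' b)"
  moreover have "\<forall>a\<in>I. \<exists>b\<in>J. \<Omega>' b \<subseteq> \<Omega> a" "\<forall>b\<in>J. \<exists>a\<in>I. \<Omega> a \<subseteq> \<Omega>' b"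
    using ball_net_eventually_imp_ex[OF dir(2) ev(1)] ball_net_eventually_imp_ex[OF dir(1) ev(2)] .
  ultimately show ?thesis
    unfolding mutually_cofinal_monotone_nets_def by blast
qed

lemma mutually_cofinal_if_exhausting:
  assumes dir: "directed_on I le" "directed_on J le'"
    and mono: "isotone_net I le \<Omega>" "isotone_net J le' \<Omega>'"
    and range: "\<Omega> ` I \<subseteq> \<SS>" "\<Omega>' ` J \<subseteq> \<SS>"
    and exhausting: "\<forall>S\<in>\<SS>. net_eventually I le (\<lambda>a. S \<subseteq> \<Omega> a)"
      "\<forall>S\<in>\<SS>. net_eventually J le' (\<lambda>b. S \<subseteq> \<Omega>' b)"
  shows "mutually_cofinal_monotone_nets I le \<Omega> J le' \<Omega>'"
proof (rule mutually_cofinal_monotone_nets_if_eventually[OF dir], intro disjI1 conjI ballI)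
  fix a assume "a \<in> I"
  then have "\<Omega> a \<in> \<SS>"
    using range(1) by blast
  then show "net_eventually J le' (\<lambda>b. \<Omega> a \<subseteq> \<Omega>' b)"
    using exhausting(2) by blast
next
  fix b assume "b \<in> J"
  then have "\<Omega>' b \<in> \<SS>"
    using range(2) by blast
  then show "net_eventually I le (\<lambda>a. \<Omega>' b \<subseteq> \<Omega> a)"
    using exhausting(1) by blast
qed (fact mono)+

lemma monotone_on_preserves_cofinality:
  assumes "monotone_on \<Sigma> orda ordb G" "\<Omega> ` I \<subseteq> \<Sigma>" "\<Omega>' ` J \<subseteq> \<Sigma>"
    and "\<forall>a\<in>I. \<exists>b\<in>J. orda (\<Omega> a) (\<Omega>' b)"
  shows "\<forall>a\<in>I. \<exists>b\<in>J. ordb (G (\<Omega> a)) (G (\<Omega>' b))"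
proof
  fix a assume "a \<in> I"
  then obtain b where "b \<in> J" "orda (\<Omega> a) (\<Omega>' b)"
    using assms(4) by blast
  moreover have "\<Omega> a \<in> \<Sigma>" "\<Omega>' b \<in> \<Sigma>"
    using assms(2,3) \<open>a \<in> I\<close> \<open>b \<in> J\<close> by auto
  ultimately show "\<exists>b\<in>J. ordb (G (\<Omega> a)) (G (\<Omega>' b))"
    using monotone_onD[OF assms(1)] by blast
qed

lemma monotone_set_function_common_limit:
  fixes G :: "'a set \<Rightarrow> real"
  assumes dir: "directed_on I le" "directed_on J le'"
    and range: "\<Omega> ` I \<subseteq> \<Sigma>" "\<Omega>' ` J \<subseteq> \<Sigma>"
    and G: "monotone_on \<Sigma> (\<subseteq>) (\<le>) G" "bounded (G ` \<Sigma>)"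
    and cofinal: "mutually_cofinal_monotone_nets I le \<Omega> J le' \<Omega>'"
  shows "\<exists>c. ((\<lambda>a. G (\<Omega> a)) \<longlongrightarrow> c) (net_filter I le) \<and> ((\<lambda>b. G (\<Omega>' b)) \<longlongrightarrow> c) (net_filter J le')"
proof -
  have G_ge: "monotone_on \<Sigma> (\<supseteq>) (\<ge>) G"
    using G(1) by (simp add: monotone_on_def)
  have "(\<lambda>a. G (\<Omega> a)) ` I \<subseteq> G ` \<Sigma>" "(\<lambda>b. G (\<Omega>' b)) ` J \<subseteq> G ` \<Sigma>"
    using range by auto
  then have bdd: "bdd_above ((\<lambda>a. G (\<Omega> a)) ` I)" "bdd_above ((\<lambda>b. G (\<Omega>' b)) ` J)"
      "bdd_below ((\<lambda>a. G (\<Omega> a)) ` I)" "bdd_below ((\<lambda>b. G (\<Omega>' b)) ` J)"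
    using bounded_imp_bdd_above[OF G(2)] bounded_imp_bdd_below[OF G(2)]
    by (auto intro: bdd_above_mono bdd_below_mono)
  from cofinal show ?thesis
    unfolding mutually_cofinal_monotone_nets_def
  proof (elim disjE conjE)
    assume "isotone_net I le \<Omega>" "isotone_net J le' \<Omega>'"
      and cof: "\<forall>a\<in>I. \<exists>b\<in>J. \<Omega> a \<subseteq> \<Omega>' b" "\<forall>b\<in>J. \<exists>a\<in>I. \<Omega>' b \<subseteq> \<Omega> a"
    then have "monotone_on I le (\<le>) (G \<circ> \<Omega>)" "monotone_on J le' (\<le>) (G \<circ> \<Omega>')"
      by (simp_all add: isotone_net_iff_monotone_on monotone_on_o[OF G(1) _ range(1)]
          monotone_on_o[OF G(1) _ range(2)])
    moreover have "\<forall>a\<in>I. \<exists>b\<in>J. G (\<Omega> a) \<le> G (\<Omega>' b)" "\<forall>b\<in>J. \<exists>a\<in>I. G (\<Omega>' b) \<le> G (\<Omega> a)"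
      using monotone_on_preserves_cofinality[OF G(1) range cof(1)]
        monotone_on_preserves_cofinality[OF G(1) range(2,1) cof(2)] .
    ultimately show ?thesis
      using dir bdd(1,2) by (intro isotone_nets_common_limit) (simp_all add: o_def)
  next
    assume "antitone_net I le \<Omega>" "antitone_net J le' \<Omega>'"
      and cof: "\<forall>a\<in>I. \<exists>b\<in>J. \<Omega>' b \<subseteq> \<Omega> a" "\<forall>b\<in>J. \<exists>a\<in>I. \<Omega> a \<subseteq> \<Omega>' b"
    then have "monotone_on I le (\<ge>) (G \<circ> \<Omega>)" "monotone_on J le' (\<ge>) (G \<circ> \<Omega>')"
      by (simp_all add: antitone_net_iff_monotone_on monotone_on_o[OF G_ge _ range(1)]
          monotone_on_o[OF G_ge _ range(2)])
    moreover have "\<forall>a\<in>I. \<exists>b\<in>J. G (\<Omega>' b) \<le> G (\<Omega> a)" "\<forall>b\<in>J. \<exists>a\<in>I. G (\<Omega> a) \<le> G (\<Omega>' b)"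
      using monotone_on_preserves_cofinality[OF G_ge range cof(1)]
        monotone_on_preserves_cofinality[OF G_ge range(2,1) cof(2)] .
    ultimately show ?thesis
      using dir bdd(3,4) by (intro antitone_nets_common_limit) (simp_all add: o_def)
  qed
qed

section \<open>Jordan decomposition of bounded additive set functions\<close>

definition positive_variation :: "'a set set \<Rightarrow> ('a set \<Rightarrow> real) \<Rightarrow> 'a set \<Rightarrow> real" where
  "positive_variation \<Sigma> \<nu> S = (SUP B\<in>{B\<in>\<Sigma>. B \<subseteq> S}. \<nu> B)"

lemma additive_empty:
  fixes \<nu> :: "'a set \<Rightarrow> real"
  assumes "additive \<Sigma> \<nu>" "{} \<in> \<Sigma>"
  shows "\<nu> {} = 0"
  using assms unfolding additive_def by (metis Int_empty_left Un_empty add_cancel_right_right)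

context ring_of_sets
begin

lemma positive_variation_upper:
  assumes "bdd_above (\<nu> ` M)" "B \<in> M" "B \<subseteq> S"
  shows "\<nu> B \<le> positive_variation M \<nu> S"
  unfolding positive_variation_def
  using assms by (intro cSUP_upper bdd_above_mono[OF assms(1)]) auto

lemma positive_variation_least:
  assumes "\<And>B. B \<in> M \<Longrightarrow> B \<subseteq> S \<Longrightarrow> \<nu> B \<le> x"
  shows "positive_variation M \<nu> S \<le> x"
  unfolding positive_variation_def using assms by (intro cSUP_least) auto

lemma positive_variation_mono:
  assumes "bdd_above (\<nu> ` M)" "S \<subseteq> T"
  shows "positive_variation M \<nu> S \<le> positive_variation M \<nu> T"
  using assms by (intro positive_variation_least positive_variation_upper) auto

text \<open>For \<open>S \<subseteq> T\<close> every \<open>B \<subseteq> S\<close> can be enlarged to \<open>B \<union> (T - S) \<subseteq> T\<close>,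
  which adds exactly \<open>\<nu> T - \<nu> S\<close>.\<close>
lemma negative_variation_mono:
  assumes "additive M \<nu>" "bdd_above (\<nu> ` M)" "S \<in> M" "T \<in> M" "S \<subseteq> T"
  shows "positive_variation M \<nu> S - \<nu> S \<le> positive_variation M \<nu> T - \<nu> T"
proof -
  have split_T: "\<nu> T = \<nu> S + \<nu> (T - S)"
    using assms(1,3-5) unfolding additive_def by (metis Diff_disjoint Diff_partition Diff)
  have "\<nu> B \<le> positive_variation M \<nu> T - \<nu> (T - S)" if "B \<in> M" "B \<subseteq> S" for B
  proof -
    have "\<nu> (B \<union> (T - S)) = \<nu> B + \<nu> (T - S)"
      using assms(1,3,4) that unfolding additive_def by blast
    moreover have "\<nu> (B \<union> (T - S)) \<le> positive_variation M \<nu> T"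
      using assms that by (intro positive_variation_upper) auto
    ultimately show ?thesis by linarith
  qed
  then have "positive_variation M \<nu> S \<le> positive_variation M \<nu> T - \<nu> (T - S)"
    by (rule positive_variation_least)
  then show ?thesis using split_T by linarith
qed

lemma bounded_additive_eq_diff_monotone:
  fixes \<nu> :: "'a set \<Rightarrow> real"
  assumes "additive M \<nu>" "bounded (\<nu> ` M)"
  obtains P N where "monotone_on M (\<subseteq>) (\<le>) P" "monotone_on M (\<subseteq>) (\<le>) N"
    "bounded (P ` M)" "bounded (N ` M)" "\<And>S. S \<in> M \<Longrightarrow> \<nu> S = P S - N S"
proof
  define P where "P = positive_variation M \<nu>"
  obtain K where K: "\<And>S. S \<in> M \<Longrightarrow> \<bar>\<nu> S\<bar> \<le> K"
    using assms(2) by (auto simp: bounded_real)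
  have bdd: "bdd_above (\<nu> ` M)"
    using assms(2) by (rule bounded_imp_bdd_above)
  have P_bounds: "0 \<le> P S \<and> P S \<le> K" for S
    using positive_variation_upper[OF bdd empty_sets, of S] additive_empty[OF assms(1)]
      positive_variation_least[of S \<nu> K] K by (force simp: P_def abs_le_iff)
  show "monotone_on M (\<subseteq>) (\<le>) P"
    using positive_variation_mono[OF bdd] by (simp add: monotone_on_def P_def)
  show "monotone_on M (\<subseteq>) (\<le>) (\<lambda>S. P S - \<nu> S)"
    using negative_variation_mono[OF assms(1) bdd] by (simp add: monotone_on_def P_def)
  show "bounded (P ` M)"
    using P_bounds by (auto simp: bounded_real)
  have "\<bar>P S - \<nu> S\<bar> \<le> K + K" if "S \<in> M" for S
    using P_bounds[of S] K[OF that] by linarith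
  then show "bounded ((\<lambda>S. P S - \<nu> S) ` M)"
    unfolding bounded_real by (intro exI[of _ "K + K"]) auto
qed simp

end

lemma (in ring_of_sets) bounded_additive_common_limit:
  fixes \<nu> :: "'a set \<Rightarrow> real"
  assumes \<nu>: "additive M \<nu>" "bounded (\<nu> ` M)"
    and dir: "directed_on I le" "directed_on J le'"
    and range: "\<Omega>\<^sub>1 ` I \<subseteq> M" "\<Omega>\<^sub>2 ` J \<subseteq> M"
    and cofinal: "mutually_cofinal_monotone_nets I le \<Omega>\<^sub>1 J le' \<Omega>\<^sub>2"
  shows "\<exists>c. ((\<lambda>a. \<nu> (\<Omega>\<^sub>1 a)) \<longlongrightarrow> c) (net_filter I le) \<and> ((\<lambda>b. \<nu> (\<Omega>\<^sub>2 b)) \<longlongrightarrow> c) (net_filter J le')"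
proof -
  obtain P N where P: "monotone_on M (\<subseteq>) (\<le>) P" "bounded (P ` M)"
    and N: "monotone_on M (\<subseteq>) (\<le>) N" "bounded (N ` M)"
    and \<nu>_eq: "\<And>S. S \<in> M \<Longrightarrow> \<nu> S = P S - N S"
    using bounded_additive_eq_diff_monotone[OF \<nu>] by blast
  obtain c d where
    "((\<lambda>a. P (\<Omega>\<^sub>1 a)) \<longlongrightarrow> c) (net_filter I le)" "((\<lambda>b. P (\<Omega>\<^sub>2 b)) \<longlongrightarrow> c) (net_filter J le')"
    "((\<lambda>a. N (\<Omega>\<^sub>1 a)) \<longlongrightarrow> d) (net_filter I le)" "((\<lambda>b. N (\<Omega>\<^sub>2 b)) \<longlongrightarrow> d) (net_filter J le')"
    using monotone_set_function_common_limit[OF dir range P cofinal]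
      monotone_set_function_common_limit[OF dir range N cofinal] by blast
  then have "((\<lambda>a. P (\<Omega>\<^sub>1 a) - N (\<Omega>\<^sub>1 a)) \<longlongrightarrow> c - d) (net_filter I le)"
    "((\<lambda>b. P (\<Omega>\<^sub>2 b) - N (\<Omega>\<^sub>2 b)) \<longlongrightarrow> c - d) (net_filter J le')"
    by (auto intro: tendsto_diff)
  moreover have "\<forall>\<^sub>F a in net_filter I le. \<nu> (\<Omega>\<^sub>1 a) = P (\<Omega>\<^sub>1 a) - N (\<Omega>\<^sub>1 a)"
    "\<forall>\<^sub>F b in net_filter J le'. \<nu> (\<Omega>\<^sub>2 b) = P (\<Omega>\<^sub>2 b) - N (\<Omega>\<^sub>2 b)"
    using eventually_in_net_filter[OF dir(1)] eventually_in_net_filter[OF dir(2)] range \<nu>_eq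
    by (auto elim!: eventually_mono)
  ultimately show ?thesis
    by (auto simp: tendsto_cong)
qed

section \<open>Locally convex function spaces\<close>

definition seminorm_ball ::
  "('a \<Rightarrow> 'x::real_vector) set \<Rightarrow> ('k \<Rightarrow> ('a \<Rightarrow> 'x) \<Rightarrow> real) \<Rightarrow> 'k set \<Rightarrow> real \<Rightarrow> ('a \<Rightarrow> 'x) \<Rightarrow> ('a \<Rightarrow> 'x) set"
  where "seminorm_ball L q F e u = {v\<in>L. \<forall>k\<in>F. q k (fadd v (fscale (-1) u)) < e}"

lemma istopology_flc_open_sets:
  "istopology (\<lambda>U. U \<subseteq> L \<and> (\<forall>u\<in>U. \<exists>F e. finite F \<and> e > 0 \<and> seminorm_ball L q F e u \<subseteq> U))"
  unfolding istopology_def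
proof (rule conjI; intro allI impI)
  fix S T
  assume S: "S \<subseteq> L \<and> (\<forall>u\<in>S. \<exists>F e. finite F \<and> e > 0 \<and> seminorm_ball L q F e u \<subseteq> S)"
    and T: "T \<subseteq> L \<and> (\<forall>u\<in>T. \<exists>F e. finite F \<and> e > 0 \<and> seminorm_ball L q F e u \<subseteq> T)"
  show "S \<inter> T \<subseteq> L \<and> (\<forall>u\<in>S \<inter> T. \<exists>F e. finite F \<and> e > 0 \<and> seminorm_ball L q F e u \<subseteq> S \<inter> T)"
  proof (intro conjI ballI)
    show "S \<inter> T \<subseteq> L"
      using S by blast
    fix u assume "u \<in> S \<inter> T"
    then obtain F1 e1 F2 e2 where "finite F1" "e1 > 0" "seminorm_ball L q F1 e1 u \<subseteq> S"
      and "finite F2" "e2 > 0" "seminorm_ball L q F2 e2 u \<subseteq> T"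
      using S T by (meson IntD1 IntD2)
    moreover have "seminorm_ball L q (F1 \<union> F2) (min e1 e2) u
        \<subseteq> seminorm_ball L q F1 e1 u \<inter> seminorm_ball L q F2 e2 u"
      unfolding seminorm_ball_def by auto
    ultimately show "\<exists>F e. finite F \<and> e > 0 \<and> seminorm_ball L q F e u \<subseteq> S \<inter> T"
      by (intro exI[of _ "F1 \<union> F2"] exI[of _ "min e1 e2"]) auto
  qed
next
  fix \<K>
  assume K: "\<forall>U\<in>\<K>. U \<subseteq> L \<and> (\<forall>u\<in>U. \<exists>F e. finite F \<and> e > 0 \<and> seminorm_ball L q F e u \<subseteq> U)"
  show "\<Union>\<K> \<subseteq> L \<and> (\<forall>u\<in>\<Union>\<K>. \<exists>F e. finite F \<and> e > 0 \<and> seminorm_ball L q F e u \<subseteq> \<Union>\<K>)"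
  proof (intro conjI ballI)
    show "\<Union>\<K> \<subseteq> L"
      using K by blast
    fix u assume "u \<in> \<Union>\<K>"
    then obtain U where "U \<in> \<K>" "u \<in> U"
      by blast
    then obtain F e where "finite F" "e > 0" "seminorm_ball L q F e u \<subseteq> U"
      using K by blast
    then show "\<exists>F e. finite F \<and> e > 0 \<and> seminorm_ball L q F e u \<subseteq> \<Union>\<K>"
      using \<open>U \<in> \<K>\<close> by blast
  qed
qed

lemma openin_flc_topology:
  "openin (flc_topology L q) U \<longleftrightarrow>
     U \<subseteq> L \<and> (\<forall>u\<in>U. \<exists>F e. finite F \<and> e > 0 \<and> seminorm_ball L q F e u \<subseteq> U)"
  unfolding flc_topology_def seminorm_ball_def[symmetric]
  by (simp only: topology_inverse'[OF istopology_flc_open_sets])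

lemma topspace_flc_topology: "topspace (flc_topology L q) = L"
proof
  show "topspace (flc_topology L q) \<subseteq> L"
    using openin_topspace[of "flc_topology L q"] unfolding openin_flc_topology by (rule conjunct1)
  have "openin (flc_topology L q) L"
    unfolding openin_flc_topology
    by (intro conjI ballI exI[of _ "{}"] exI[of _ "1::real"]) (auto simp: seminorm_ball_def)
  then show "L \<subseteq> topspace (flc_topology L q)"
    by (rule openin_subset)
qed

definition flinear_on :: "('a \<Rightarrow> 'x::real_vector) set \<Rightarrow> (('a \<Rightarrow> 'x) \<Rightarrow> real) \<Rightarrow> bool" where
  "flinear_on L \<phi> \<longleftrightarrow>
     (\<forall>u\<in>L. \<forall>v\<in>L. \<phi> (fadd u v) = \<phi> u + \<phi> v) \<and> (\<forall>u\<in>L. \<forall>c. \<phi> (fscale c u) = c * \<phi> u)"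

lemma fdual_iff_flinear_continuous:
  "\<phi> \<in> fdual L q \<longleftrightarrow> flinear_on L \<phi> \<and> continuous_map (flc_topology L q) euclidean \<phi>"
  by (simp add: fdual_def flinear_on_def)

lemma flinear_on_fadd: "flinear_on L \<phi> \<Longrightarrow> u \<in> L \<Longrightarrow> v \<in> L \<Longrightarrow> \<phi> (fadd u v) = \<phi> u + \<phi> v"
  by (simp add: flinear_on_def)

lemma flinear_on_fscale: "flinear_on L \<phi> \<Longrightarrow> u \<in> L \<Longrightarrow> \<phi> (fscale c u) = c * \<phi> u"
  by (simp add: flinear_on_def)

lemma flc_space_closed:
  assumes "flc_space L q"
  shows "fzero \<in> L" "u \<in> L \<Longrightarrow> v \<in> L \<Longrightarrow> fadd u v \<in> L" "u \<in> L \<Longrightarrow> fscale c u \<in> L"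
  using assms by (simp_all add: flc_space_def fsubspace_def)

lemma flc_space_seminorm_scale:
  assumes "flc_space L q" "u \<in> L"
  shows "q k (fscale c u) = \<bar>c\<bar> * q k u"
  using assms by (simp add: flc_space_def fseminorm_on_def)

lemma flinear_on_fzero:
  assumes "flc_space L q" "flinear_on L \<phi>"
  shows "\<phi> fzero = 0"
proof -
  have "\<phi> (fscale 0 fzero) = 0 * \<phi> fzero"
    using flc_space_closed(1)[OF assms(1)] by (rule flinear_on_fscale[OF assms(2)])
  then show ?thesis
    by (simp add: fscale_def fzero_def)
qed

lemma fadd_fscale_fzero: "fadd v (fscale (-1) fzero) = v"
  by (simp add: fadd_def fscale_def fzero_def)

lemma flinear_on_diff:
  assumes "flc_space L q" "flinear_on L \<psi>" "u \<in> L" "v \<in> L"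
  shows "\<psi> (fadd v (fscale (-1) u)) = \<psi> v - \<psi> u"
  using assms by (simp add: flinear_on_fadd flinear_on_fscale flc_space_closed)

lemma fdual_bounded_on_fbounded:
  assumes L: "flc_space L q" and \<phi>: "\<phi> \<in> fdual L q" and B: "fbounded L q B"
  shows "\<exists>t>0. \<forall>v\<in>B. \<bar>\<phi> v\<bar> \<le> t"
proof -
  have lin: "flinear_on L \<phi>" and cont: "continuous_map (flc_topology L q) euclidean \<phi>"
    using \<phi> by (simp_all add: fdual_iff_flinear_continuous)
  define U where "U = {v \<in> topspace (flc_topology L q). \<phi> v \<in> ball 0 1}"
  have "openin (flc_topology L q) U"
    unfolding U_def by (rule openin_continuous_map_preimage[OF cont]) simp
  moreover have "fzero \<in> U"
    using flc_space_closed(1)[OF L] flinear_on_fzero[OF L lin]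
    unfolding U_def topspace_flc_topology by simp
  ultimately obtain t where "t > 0" and absorb: "B \<subseteq> fscale t ` U"
    using B unfolding fbounded_def by (meson abs_ge_self)
  have "\<bar>\<phi> v\<bar> \<le> t" if v: "v \<in> B" for v
  proof -
    obtain w where w: "w \<in> U" "v = fscale t w"
      using absorb v by blast
    then have "\<bar>\<phi> v\<bar> = t * \<bar>\<phi> w\<bar>"
      using flinear_on_fscale[OF lin] \<open>t > 0\<close> unfolding U_def topspace_flc_topology
      by (simp add: abs_mult)
    also have "\<dots> \<le> t"
      using w(1) \<open>t > 0\<close> unfolding U_def by simp
    finally show ?thesis .
  qed
  then show ?thesis
    using \<open>t > 0\<close> by blast
qed

lemma flinear_on_seminorm_ball_estimate:
  assumes L: "flc_space L q" and lin: "flinear_on L \<psi>"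
    and bound: "\<forall>w\<in>seminorm_ball L q F e fzero. \<bar>\<psi> w\<bar> \<le> 1"
    and "\<delta> > 0" and u: "u \<in> L" and v: "v \<in> seminorm_ball L q F (e * \<delta>) u"
  shows "\<bar>\<psi> v - \<psi> u\<bar> \<le> \<delta>"
proof -
  define d where "d = fadd v (fscale (-1) u)"
  have "v \<in> L" "d \<in> L"
    using v u flc_space_closed[OF L] unfolding seminorm_ball_def d_def by auto
  have "\<forall>k\<in>F. q k (fscale (1 / \<delta>) d) < e"
    using v \<open>\<delta> > 0\<close> \<open>d \<in> L\<close> flc_space_seminorm_scale[OF L]
    unfolding seminorm_ball_def d_def by (auto simp: field_simps)
  then have "\<bar>\<psi> (fscale (1 / \<delta>) d)\<bar> \<le> 1"
    using bound flc_space_closed(3)[OF L \<open>d \<in> L\<close>] unfolding seminorm_ball_def fadd_fscale_fzero by blast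
  moreover have "\<psi> (fscale (1 / \<delta>) d) = (\<psi> v - \<psi> u) / \<delta>"
    using flinear_on_fscale[OF lin \<open>d \<in> L\<close>] flinear_on_diff[OF L lin u \<open>v \<in> L\<close>] by (simp add: d_def)
  ultimately show ?thesis
    using \<open>\<delta> > 0\<close> by (simp add: abs_divide)
qed

lemma fdual_if_bounded_on_neighbourhood:
  assumes L: "flc_space L q" and lin: "flinear_on L \<psi>"
    and U: "openin (flc_topology L q) U" "fzero \<in> U" and bound: "\<forall>v\<in>U. \<bar>\<psi> v\<bar> \<le> 1"
  shows "\<psi> \<in> fdual L q"
proof -
  obtain F e where "finite F" "e > 0" and ball0: "seminorm_ball L q F e fzero \<subseteq> U"
    using U unfolding openin_flc_topology by meson
  have "openin (flc_topology L q) {u \<in> L. \<psi> u \<in> V}" if "open V" for V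
    unfolding openin_flc_topology
  proof (intro conjI ballI)
    fix u assume u: "u \<in> {u \<in> L. \<psi> u \<in> V}"
    then obtain \<epsilon> where "\<epsilon> > 0" and \<epsilon>: "\<And>y. dist y (\<psi> u) < \<epsilon> \<Longrightarrow> y \<in> V"
      using \<open>open V\<close> unfolding open_dist by blast
    have "\<psi> v \<in> V" if "v \<in> seminorm_ball L q F (e * (\<epsilon> / 2)) u" for v
    proof (rule \<epsilon>)
      have "\<bar>\<psi> v - \<psi> u\<bar> \<le> \<epsilon> / 2"
        using ball0 bound u that \<open>\<epsilon> > 0\<close> by (intro flinear_on_seminorm_ball_estimate[OF L lin]) auto
      then show "dist (\<psi> v) (\<psi> u) < \<epsilon>"
        using \<open>\<epsilon> > 0\<close> by (simp add: dist_real_def)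
    qed
    then show "\<exists>F e. finite F \<and> e > 0 \<and> seminorm_ball L q F e u \<subseteq> {u \<in> L. \<psi> u \<in> V}"
      using \<open>finite F\<close> \<open>e > 0\<close> \<open>\<epsilon> > 0\<close>
      by (intro exI[of _ F] exI[of _ "e * (\<epsilon> / 2)"]) (auto simp: seminorm_ball_def)
  qed auto
  then have "continuous_map (flc_topology L q) euclidean \<psi>"
    by (simp add: continuous_map_def topspace_flc_topology)
  then show ?thesis
    using lin by (simp add: fdual_iff_flinear_continuous)
qed

lemma abs_convex_combination_le:
  fixes x y t :: real
  assumes "0 \<le> t" "t \<le> 1" "\<bar>x\<bar> \<le> 1" "\<bar>y\<bar> \<le> 1"
  shows "\<bar>t * x + (1 - t) * y\<bar> \<le> 1"
  using assms by (intro order_trans[OF abs_triangle_ineq]) (simp add: abs_mult convex_bound_le)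

lemma closedin_polar:
  assumes "\<Phi> \<subseteq> fdual L q"
  shows "closedin (flc_topology L q) {u\<in>L. \<forall>\<phi>\<in>\<Phi>. \<bar>\<phi> u\<bar> \<le> 1}"
proof -
  have "{u\<in>L. \<forall>\<phi>\<in>\<Phi>. \<bar>\<phi> u\<bar> \<le> 1}
      = \<Inter> (insert L ((\<lambda>\<phi>. {u \<in> topspace (flc_topology L q). \<phi> u \<in> cball 0 1}) ` \<Phi>))"
    by (auto simp: topspace_flc_topology)
  also have "closedin (flc_topology L q) \<dots>"
  proof (rule closedin_Inter)
    fix C assume "C \<in> insert L ((\<lambda>\<phi>. {u \<in> topspace (flc_topology L q). \<phi> u \<in> cball 0 1}) ` \<Phi>)"
    then consider "C = L"
      | \<phi> where "\<phi> \<in> \<Phi>" "C = {u \<in> topspace (flc_topology L q). \<phi> u \<in> cball 0 1}"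
      by blast
    then show "closedin (flc_topology L q) C"
    proof cases
      case 1
      then show ?thesis
        using closedin_topspace[of "flc_topology L q"] by (simp add: topspace_flc_topology)
    next
      case 2
      then have "continuous_map (flc_topology L q) euclidean \<phi>"
        using assms by (auto simp: fdual_iff_flinear_continuous)
      then show ?thesis
        unfolding \<open>C = _\<close> by (rule closedin_continuous_map_preimage) simp
    qed
  qed simp
  finally show ?thesis .
qed

lemma fscale_in_polar:
  assumes L: "flc_space L q" and \<Phi>: "\<Phi> \<subseteq> fdual L q"
    and u: "u \<in> L" and small: "\<forall>\<phi>\<in>\<Phi>. \<bar>c\<bar> * \<bar>\<phi> u\<bar> \<le> 1"
  shows "fscale c u \<in> {u\<in>L. \<forall>\<phi>\<in>\<Phi>. \<bar>\<phi> u\<bar> \<le> 1}"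
proof -
  have "\<bar>\<phi> (fscale c u)\<bar> \<le> 1" if "\<phi> \<in> \<Phi>" for \<phi>
  proof -
    have "flinear_on L \<phi>"
      using \<Phi> that by (auto simp: fdual_iff_flinear_continuous)
    then have "\<phi> (fscale c u) = c * \<phi> u"
      using u by (rule flinear_on_fscale)
    then show ?thesis
      using small that by (simp add: abs_mult)
  qed
  then show ?thesis
    using flc_space_closed(3)[OF L u] by simp
qed

lemma fbarrel_polar:
  fixes \<Phi> :: "(('a \<Rightarrow> 'x::real_vector) \<Rightarrow> real) set"
  assumes L: "flc_space L q" and \<Phi>: "\<Phi> \<subseteq> fdual L q"
    and pointwise_bounded: "\<forall>u\<in>L. \<exists>t>0. \<forall>\<phi>\<in>\<Phi>. \<bar>\<phi> u\<bar> \<le> t"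
  shows "fbarrel L q {u\<in>L. \<forall>\<phi>\<in>\<Phi>. \<bar>\<phi> u\<bar> \<le> 1}" (is "fbarrel L q ?B")
proof -
  have lin: "flinear_on L \<phi>" if "\<phi> \<in> \<Phi>" for \<phi>
    using \<Phi> that by (auto simp: fdual_iff_flinear_continuous)
  show ?thesis
    unfolding fbarrel_def
  proof (intro conjI ballI allI impI)
    show "closedin (flc_topology L q) ?B"
      by (rule closedin_polar[OF \<Phi>])
    fix u v assume u: "u \<in> ?B" and v: "v \<in> ?B"
    fix t :: real assume "0 \<le> t \<and> t \<le> 1"
    have "\<bar>\<phi> (fadd (fscale t u) (fscale (1 - t) v))\<bar> \<le> 1" if "\<phi> \<in> \<Phi>" for \<phi>
    proof -
      have "\<phi> (fadd (fscale t u) (fscale (1 - t) v)) = t * \<phi> u + (1 - t) * \<phi> v"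
        using lin[OF that] u v flc_space_closed[OF L] by (simp add: flinear_on_fadd flinear_on_fscale)
      then show ?thesis
        using u v that \<open>0 \<le> t \<and> t \<le> 1\<close> by (simp add: abs_convex_combination_le)
    qed
    then show "fadd (fscale t u) (fscale (1 - t) v) \<in> ?B"
      using u v flc_space_closed[OF L] by simp
  next
    fix u and c :: real assume "u \<in> ?B" and "\<bar>c\<bar> \<le> 1"
    then show "fscale c u \<in> ?B"
      by (intro fscale_in_polar[OF L \<Phi>]) (auto intro: mult_le_one)
  next
    fix u assume "u \<in> L"
    then obtain t where "t > 0" and t: "\<forall>\<phi>\<in>\<Phi>. \<bar>\<phi> u\<bar> \<le> t"
      using pointwise_bounded by blast
    have "\<bar>c\<bar> * \<bar>\<phi> u\<bar> \<le> 1" if "\<bar>c\<bar> \<le> 1 / t" "\<phi> \<in> \<Phi>" for c \<phi>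
    proof -
      have "\<bar>c\<bar> * \<bar>\<phi> u\<bar> \<le> 1 / t * t"
        using t that by (intro mult_mono) auto
      then show ?thesis
        using \<open>t > 0\<close> by simp
    qed
    then have "fscale c u \<in> ?B" if "\<bar>c\<bar> \<le> 1 / t" for c
      using \<open>u \<in> L\<close> that by (intro fscale_in_polar[OF L \<Phi>]) auto
    then show "\<exists>r>0. \<forall>c. \<bar>c\<bar> \<le> r \<longrightarrow> fscale c u \<in> ?B"
      using \<open>t > 0\<close> by (intro exI[of _ "1 / t"]) auto
  qed auto
qed

lemma fdual_if_bounded_on_barrel:
  assumes "flc_space L q" "barreled L q" "fbarrel L q B" "flinear_on L \<psi>" "\<forall>u\<in>B. \<bar>\<psi> u\<bar> \<le> 1"
  shows "\<psi> \<in> fdual L q"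
proof -
  obtain U where "openin (flc_topology L q) U" "fzero \<in> U" "U \<subseteq> B"
    using assms(2,3) unfolding barreled_def by blast
  then show ?thesis
    using assms(5) by (intro fdual_if_bounded_on_neighbourhood[OF assms(1,4), of U]) auto
qed

section \<open>Multiplication operators and their adjoints\<close>

lemma chi_mult_fadd: "chi_mult A (fadd u v) = fadd (chi_mult A u) (chi_mult A v)"
  by (simp add: chi_mult_def fadd_def fun_eq_iff scaleR_add_right)

lemma chi_mult_fscale: "chi_mult A (fscale c u) = fscale c (chi_mult A u)"
  by (simp add: chi_mult_def fscale_def fun_eq_iff)

lemma chi_mult_Un: "A \<inter> B = {} \<Longrightarrow> chi_mult (A \<union> B) u = fadd (chi_mult A u) (chi_mult B u)"
  by (auto simp: chi_mult_def fadd_def fun_eq_iff indicator_def)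

lemma additive_chi_mult:
  assumes "flinear_on L \<phi>" "\<forall>A\<in>\<Sigma>. \<forall>u\<in>L. chi_mult A u \<in> L" "u \<in> L"
  shows "additive \<Sigma> (\<lambda>A. \<phi> (chi_mult A u))"
  using assms by (simp add: additive_def chi_mult_Un flinear_on_fadd)

lemma fdual_comp_chi_mult:
  assumes L: "flc_space L q" and \<phi>: "\<phi> \<in> fdual L q"
    and closed: "\<forall>u\<in>L. chi_mult A u \<in> L"
    and cont: "continuous_map (flc_topology L q) (flc_topology L q) (chi_mult A)"
  shows "(\<lambda>u. \<phi> (chi_mult A u)) \<in> fdual L q"
proof -
  have "flinear_on L \<phi>" "continuous_map (flc_topology L q) euclidean \<phi>"
    using \<phi> by (simp_all add: fdual_iff_flinear_continuous)
  then show ?thesis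
    using closed flc_space_closed[OF L] continuous_map_compose[OF cont]
    by (auto simp: fdual_iff_flinear_continuous flinear_on_def chi_mult_fadd chi_mult_fscale o_def)
qed

lemma tendsto_weakstar_adj_limit:
  assumes "directed_on I le" "weakstar_adj_limit L I le \<Omega> \<phi> \<psi>" "u \<in> L"
  shows "((\<lambda>a. \<phi> (chi_mult (\<Omega> a) u)) \<longlongrightarrow> \<psi> u) (net_filter I le)"
  using assms by (simp add: weakstar_adj_limit_def net_tendsto_iff_tendsto)

lemma eventually_chi_mult_in:
  assumes "directed_on I le" "\<Omega> ` I \<subseteq> \<Sigma>" "\<forall>A\<in>\<Sigma>. \<forall>u\<in>L. chi_mult A u \<in> L" "u \<in> L"
  shows "\<forall>\<^sub>F a in net_filter I le. chi_mult (\<Omega> a) u \<in> L"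
  using eventually_in_net_filter[OF assms(1)] assms(2-4) by (auto elim!: eventually_mono)

lemma flinear_on_weakstar_adj_limit:
  assumes L: "flc_space L q" and chi_closed: "\<forall>A\<in>\<Sigma>. \<forall>u\<in>L. chi_mult A u \<in> L"
    and dir: "directed_on I le" and range: "\<Omega> ` I \<subseteq> \<Sigma>"
    and \<phi>: "flinear_on L \<phi>" and lim: "weakstar_adj_limit L I le \<Omega> \<phi> \<psi>"
  shows "flinear_on L \<psi>"
proof -
  let ?F = "net_filter I le"
  note tendsto = tendsto_weakstar_adj_limit[OF dir lim]
  note unique = tendsto_unique[OF net_filter_neq_bot[OF dir]]
  note in_L = eventually_chi_mult_in[OF dir range chi_closed]
  have "\<psi> (fadd u v) = \<psi> u + \<psi> v" if u: "u \<in> L" and v: "v \<in> L" for u v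
  proof -
    have "\<forall>\<^sub>F a in ?F. \<phi> (chi_mult (\<Omega> a) (fadd u v)) = \<phi> (chi_mult (\<Omega> a) u) + \<phi> (chi_mult (\<Omega> a) v)"
      using eventually_conj[OF in_L[OF u] in_L[OF v]]
      by eventually_elim (simp add: chi_mult_fadd flinear_on_fadd[OF \<phi>])
    then have "((\<lambda>a. \<phi> (chi_mult (\<Omega> a) (fadd u v))) \<longlongrightarrow> \<psi> u + \<psi> v) ?F"
      using tendsto_add[OF tendsto[OF u] tendsto[OF v]] by (simp add: tendsto_cong)
    then show ?thesis
      using unique tendsto flc_space_closed(2)[OF L u v] by blast
  qed
  moreover have "\<psi> (fscale c u) = c * \<psi> u" if u: "u \<in> L" for u c
  proof -
    have "\<forall>\<^sub>F a in ?F. \<phi> (chi_mult (\<Omega> a) (fscale c u)) = c * \<phi> (chi_mult (\<Omega> a) u)"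
      using in_L[OF u] by eventually_elim (simp add: chi_mult_fscale flinear_on_fscale[OF \<phi>])
    then have "((\<lambda>a. \<phi> (chi_mult (\<Omega> a) (fscale c u))) \<longlongrightarrow> c * \<psi> u) ?F"
      using tendsto_mult_left[OF tendsto[OF u]] by (simp add: tendsto_cong)
    then show ?thesis
      using unique tendsto flc_space_closed(3)[OF L u] by blast
  qed
  ultimately show ?thesis
    unfolding flinear_on_def by blast
qed

lemma weakstar_adj_limit_in_fdual:
  assumes L: "flc_space L q" "barreled L q"
    and chi_closed: "\<forall>A\<in>\<Sigma>. \<forall>u\<in>L. chi_mult A u \<in> L"
    and chi_cont: "\<forall>A\<in>\<Sigma>. continuous_map (flc_topology L q) (flc_topology L q) (chi_mult A)"
    and chi_bdd: "\<forall>u\<in>L. fbounded L q {chi_mult A u | A. A \<in> \<Sigma>}"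
    and dir: "directed_on I le" and range: "\<Omega> ` I \<subseteq> \<Sigma>"
    and \<phi>: "\<phi> \<in> fdual L q" and lim: "weakstar_adj_limit L I le \<Omega> \<phi> \<psi>"
  shows "\<psi> \<in> fdual L q"
proof (rule fdual_if_bounded_on_barrel[OF L])
  show "flinear_on L \<psi>"
    using \<phi> by (intro flinear_on_weakstar_adj_limit[OF L(1) chi_closed dir range _ lim])
      (simp add: fdual_iff_flinear_continuous)
  show "fbarrel L q {u\<in>L. \<forall>\<phi>'\<in>(\<lambda>A u. \<phi> (chi_mult A u)) ` \<Sigma>. \<bar>\<phi>' u\<bar> \<le> 1}"
  proof (rule fbarrel_polar[OF L(1)])
    show "(\<lambda>A u. \<phi> (chi_mult A u)) ` \<Sigma> \<subseteq> fdual L q"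
      using fdual_comp_chi_mult[OF L(1) \<phi>] chi_closed chi_cont by blast
    show "\<forall>u\<in>L. \<exists>t>0. \<forall>\<phi>'\<in>(\<lambda>A u. \<phi> (chi_mult A u)) ` \<Sigma>. \<bar>\<phi>' u\<bar> \<le> t"
      using fdual_bounded_on_fbounded[OF L(1) \<phi>] chi_bdd by blast
  qed
  show "\<forall>u\<in>{u\<in>L. \<forall>\<phi>'\<in>(\<lambda>A u. \<phi> (chi_mult A u)) ` \<Sigma>. \<bar>\<phi>' u\<bar> \<le> 1}. \<bar>\<psi> u\<bar> \<le> 1"
  proof
    fix u assume u: "u \<in> {u\<in>L. \<forall>\<phi>'\<in>(\<lambda>A u. \<phi> (chi_mult A u)) ` \<Sigma>. \<bar>\<phi>' u\<bar> \<le> 1}"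
    have "\<forall>\<^sub>F a in net_filter I le. \<bar>\<phi> (chi_mult (\<Omega> a) u)\<bar> \<le> 1"
      using eventually_in_net_filter[OF dir] range u by (auto elim!: eventually_mono)
    then show "\<bar>\<psi> u\<bar> \<le> 1"
      using u tendsto_upperbound[OF tendsto_rabs[OF tendsto_weakstar_adj_limit[OF dir lim]]]
        net_filter_neq_bot[OF dir] by blast
  qed
qed

lemma same_adj_limit_if_mutually_cofinal:
  assumes L: "flc_space L q" "barreled L q" and \<Sigma>: "ring_of_sets X \<Sigma>"
    and chi_closed: "\<forall>A\<in>\<Sigma>. \<forall>u\<in>L. chi_mult A u \<in> L"
    and chi_cont: "\<forall>A\<in>\<Sigma>. continuous_map (flc_topology L q) (flc_topology L q) (chi_mult A)"
    and chi_bdd: "\<forall>u\<in>L. fbounded L q {chi_mult A u | A. A \<in> \<Sigma>}"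
    and dir: "directed_on I le" "directed_on J le'"
    and range: "\<Omega> ` I \<subseteq> \<Sigma>" "\<Omega>' ` J \<subseteq> \<Sigma>"
    and cofinal: "mutually_cofinal_monotone_nets I le \<Omega> J le' \<Omega>'"
  shows "same_adj_limit L q I le \<Omega> J le' \<Omega>'"
  unfolding same_adj_limit_def
proof
  fix \<phi> assume \<phi>: "\<phi> \<in> fdual L q"
  have "\<exists>c. net_tendsto I le (\<lambda>a. \<phi> (chi_mult (\<Omega> a) u)) c \<and> net_tendsto J le' (\<lambda>b. \<phi> (chi_mult (\<Omega>' b) u)) c"
    if "u \<in> L" for u
  proof -
    have "additive \<Sigma> (\<lambda>A. \<phi> (chi_mult A u))"
      using \<phi> chi_closed \<open>u \<in> L\<close> by (intro additive_chi_mult) (auto simp: fdual_iff_flinear_continuous)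
    moreover have "bounded ((\<lambda>A. \<phi> (chi_mult A u)) ` \<Sigma>)"
      using fdual_bounded_on_fbounded[OF L(1) \<phi>] chi_bdd \<open>u \<in> L\<close>
      unfolding bounded_real by fastforce
    ultimately show ?thesis
      using ring_of_sets.bounded_additive_common_limit[OF \<Sigma> _ _ dir range cofinal]
      by (simp add: net_tendsto_iff_tendsto[OF dir(1)] net_tendsto_iff_tendsto[OF dir(2)])
  qed
  then obtain \<psi> where "weakstar_adj_limit L I le \<Omega> \<phi> \<psi>" "weakstar_adj_limit L J le' \<Omega>' \<phi> \<psi>"
    unfolding weakstar_adj_limit_def by metis
  moreover have "\<psi> \<in> fdual L q"
    using weakstar_adj_limit_in_fdual[OF L chi_closed chi_cont chi_bdd dir(1) range(1) \<phi>] calculation(1) .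
  ultimately show "\<exists>\<psi>\<in>fdual L q. weakstar_adj_limit L I le \<Omega> \<phi> \<psi> \<and> weakstar_adj_limit L J le' \<Omega>' \<phi> \<psi>"
    by blast
qed

theorem propositionA2:
  fixes M :: "'a measure"
    and pX :: "'kx \<Rightarrow> 'x::real_vector \<Rightarrow> real"
    and L :: "('a \<Rightarrow> 'x) set"
    and q :: "'k \<Rightarrow> ('a \<Rightarrow> 'x) \<Rightarrow> real"
    and I :: "'i set" and le :: "'i \<Rightarrow> 'i \<Rightarrow> bool" and \<Omega> :: "'i \<Rightarrow> 'a set"
    and J :: "'j set" and le' :: "'j \<Rightarrow> 'j \<Rightarrow> bool" and \<Omega>' :: "'j \<Rightarrow> 'a set"
  assumes X_lc: "lc_space (UNIV :: 'x set) pX"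
    and L_lc: "flc_space L q"
    and L_meas: "\<forall>u\<in>L. u \<in> measurable M (sigma UNIV {U. openin (lc_topology (UNIV :: 'x set) pX) U})"
    and L_barreled: "barreled L q"
    and chi_closed: "\<forall>A\<in>sets M. \<forall>u\<in>L. chi_mult A u \<in> L"
    and chi_cont: "\<forall>A\<in>sets M. continuous_map (flc_topology L q) (flc_topology L q) (chi_mult A)"
    and chi_bdd: "\<forall>u\<in>L. fbounded L q {chi_mult A u | A. A \<in> sets M}"
    and I_dir: "directed_on I le" and J_dir: "directed_on J le'"
    and \<Omega>_meas: "\<Omega> ` I \<subseteq> sets M" and \<Omega>'_meas: "\<Omega>' ` J \<subseteq> sets M"
  shows "((isotone_net I le \<Omega> \<and> isotone_net J le' \<Omega>' \<and>
            (\<forall>a\<in>I. net_eventually J le' (\<lambda>b. \<Omega> a \<subseteq> \<Omega>' b)) \<and>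
            (\<forall>b\<in>J. net_eventually I le (\<lambda>a. \<Omega>' b \<subseteq> \<Omega> a)))
          \<or> (antitone_net I le \<Omega> \<and> antitone_net J le' \<Omega>' \<and>
            (\<forall>a\<in>I. net_eventually J le' (\<lambda>b. \<Omega>' b \<subseteq> \<Omega> a)) \<and>
            (\<forall>b\<in>J. net_eventually I le (\<lambda>a. \<Omega> a \<subseteq> \<Omega>' b)))
          \<longrightarrow> same_adj_limit L q I le \<Omega> J le' \<Omega>')
       \<and> (\<forall>\<SS>. \<SS> \<subseteq> sets M \<and>
            isotone_net I le \<Omega> \<and> \<Omega> ` I \<subseteq> \<SS> \<and> (\<forall>S\<in>\<SS>. net_eventually I le (\<lambda>a. S \<subseteq> \<Omega> a)) \<and>
            isotone_net J le' \<Omega>' \<and> \<Omega>' ` J \<subseteq> \<SS> \<and> (\<forall>S\<in>\<SS>. net_eventually J le' (\<lambda>b. S \<subseteq> \<Omega>' b))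
          \<longrightarrow> same_adj_limit L q I le \<Omega> J le' \<Omega>')"
proof -
  have same: "mutually_cofinal_monotone_nets I le \<Omega> J le' \<Omega>' \<Longrightarrow> same_adj_limit L q I le \<Omega> J le' \<Omega>'"
    by (rule same_adj_limit_if_mutually_cofinal[OF L_lc L_barreled sets.ring_of_sets_axioms
          chi_closed chi_cont chi_bdd I_dir J_dir \<Omega>_meas \<Omega>'_meas])
  show ?thesis
  proof (intro conjI impI allI)
    show "same_adj_limit L q I le \<Omega> J le' \<Omega>'" if "\<SS> \<subseteq> sets M \<and>
            isotone_net I le \<Omega> \<and> \<Omega> ` I \<subseteq> \<SS> \<and> (\<forall>S\<in>\<SS>. net_eventually I le (\<lambda>a. S \<subseteq> \<Omega> a)) \<and>
            isotone_net J le' \<Omega>' \<and> \<Omega>' ` J \<subseteq> \<SS> \<and> (\<forall>S\<in>\<SS>. net_eventually J le' (\<lambda>b. S \<subseteq> \<Omega>' b))"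
      for \<SS>
      using that by (elim conjE) (intro same mutually_cofinal_if_exhausting[OF I_dir J_dir]; assumption)
  qed (rule same[OF mutually_cofinal_monotone_nets_if_eventually[OF I_dir J_dir]])
qed

end
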